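(* Consider the relative dynamics described in the context with initial location $\mathbf{x}_0=(x_0,y_0)$, $\|\mathbf{x}_0\|>1$, and final time $T>0$. The straight-line trajectory obtained by holding a constant heading $\psi$ on $[0,T]$ intersects the Proximity Circle if and only if $$\phi_{\tan}+\operatorname{atan}\big(\mu\sin\psi,\ 1-\mu\cos\psi\big)<\pi\quad\text{and}\quad T>t_c,$$ where $$\phi_{\tan}=\pi-\sin^{-1}\Big(\tfrac{1}{\|\mathbf{x}_0\|}\Big)+\operatorname{atan}(y_0,x_0),$$ $$t_c=\frac{1}{v(\psi)}\Big[-(x_0\cos\phi+y_0\sin\phi)-\sqrt{1-(x_0\sin\phi-y_0\cos\phi)^2}\Big],$$ with $\phi=\operatorname{atan}(\mu\sin\psi,\ \mu\cos\psi-1)$ and $v(\psi)=\sqrt{1+\mu^2-2\mu\cos\psi}$; $t_c$ is the time needed to reach the Proximity Circle along this trajectory.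
   Context: Pursuer-fixed frame: the Evader's relative position $\mathbf{x}(t)=(x(t),y(t))\in\mathbb{R}^2$ evolves as $\dot x=\mu\cos\psi(t)-1$, $\dot y=\mu\sin\psi(t)$, $\mathbf{x}(0)=\mathbf{x}_0$, where $\mu\in(0,1)$ and $\psi$ is the Evader's heading. The Proximity Circle is $\|\mathbf{x}\|=1$. $\operatorname{atan}(a,b)$ denotes the two-argument arctangent, i.e. the polar angle of the vector $(b,a)$. The paper assumes throughout that $y\ge 0$. *)

theory Defs
  imports "HOL-Analysis.Analysis"
begin

definition atan2 :: "real \<Rightarrow> real \<Rightarrow> real" where
  "atan2 a b = Arg (Complex b a)"

text \<open>Relative position under constant heading psi (pursuer-fixed frame).\<close>
definition traj :: "real \<Rightarrow> real \<Rightarrow> real \<Rightarrow> real \<Rightarrow> real \<Rightarrow> real \<times> real" where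
  "traj \<mu> \<psi> x0 y0 t = (x0 + t * (\<mu> * cos \<psi> - 1), y0 + t * (\<mu> * sin \<psi>))"

end

theory Submission
  imports Defs
begin

text \<open>Rotate coordinates so that the relative velocity \<open>d\<close> points along the first axis.
  With \<open>v = \<bar>d\<bar>\<close>, \<open>b\<close> the component of \<open>x\<^sub>0\<close> along \<open>d / v\<close> and \<open>w\<close> the perpendicular one,
  the position at time \<open>t\<close> is \<open>(v t + b, w)\<close>. Starting outside the unit circle, it enters the
  circle during \<open>[0, T]\<close> iff it moves towards the pursuer (\<open>b < 0\<close>), the line passes within
  distance 1 of it (\<open>\<bar>w\<bar> < 1\<close>), and the entry time \<open>(- b - sqrt (1 - w\<^sup>2)) / v\<close> is less than \<open>T\<close>.
  The angle condition is a restatement of \<open>b < 0 \<and> \<bar>w\<bar> < 1\<close>: the angle between \<open>x\<^sub>0\<close> and \<open>-d\<close>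
  is \<open>atan2 y\<^sub>0 x\<^sub>0 + atan2 (\<mu> sin \<psi>) (1 - \<mu> cos \<psi>)\<close>, and the ray from \<open>x\<^sub>0\<close> in direction \<open>d\<close>
  meets the open unit disc iff this angle is below \<open>arcsin (1 / \<bar>x\<^sub>0\<bar>)\<close>.\<close>

lemma norm_mult_cos_atan2: "norm (b, a) * cos (atan2 a b) = b"
  and norm_mult_sin_atan2: "norm (b, a) * sin (atan2 a b) = a"
  by (cases "Complex b a = 0";
      simp add: atan2_def cos_Arg sin_Arg norm_Pair cmod_def complex_eq_iff)+

lemma atan2_nonneg_iff: "0 \<le> atan2 a b \<longleftrightarrow> 0 \<le> a"
  by (simp add: atan2_def Arg_less_0)

lemma atan2_le_pi: "atan2 a b \<le> pi"
  by (simp add: atan2_def Arg_le_pi)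

lemma abs_atan2_less_pi_half: "0 < b \<Longrightarrow> \<bar>atan2 a b\<bar> < pi / 2"
  using Arg_Re_pos[of "Complex b a"] by (simp add: atan2_def)

lemma atan2_scale: "0 < k \<Longrightarrow> atan2 (k * a) (k * b) = atan2 a b"
proof -
  assume "0 < k"
  have "Complex (k * b) (k * a) = Complex b a * of_real k"
    by (simp add: complex_eq_iff)
  with \<open>0 < k\<close> show ?thesis
    by (simp add: atan2_def)
qed

lemma cos_le_zero_pi: "pi / 2 \<le> x \<Longrightarrow> x \<le> 3 * pi / 2 \<Longrightarrow> cos x \<le> 0"
  using cos_ge_zero[of "x - pi"] by simp

lemma less_arcsin_iff_cos_sin:
  fixes g s :: real
  assumes "0 \<le> g" "g \<le> 3 * pi / 2" "\<bar>s\<bar> \<le> 1"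
  shows "g < arcsin s \<longleftrightarrow> 0 < cos g \<and> \<bar>sin g\<bar> < s"
proof (cases "g < pi / 2")
  case True
  have "0 < cos g" "0 \<le> sin g"
    using True assms(1) by (auto intro: cos_gt_zero_pi sin_ge_zero)
  moreover have "arcsin s \<le> g \<longleftrightarrow> s \<le> sin g"
    using True assms by (intro arcsin_le_iff) auto
  ultimately show ?thesis
    by auto
next
  case False
  then have "cos g \<le> 0"
    using assms(2) by (intro cos_le_zero_pi) auto
  moreover have "arcsin s \<le> pi / 2"
    using assms(3) by (intro arcsin_ubound) auto
  ultimately show ?thesis
    using False by auto
qed

lemma tangent_angle_condition_iff:
  fixes x0 y0 c s :: real
  assumes unit: "c\<^sup>2 + s\<^sup>2 = 1" and "c < 0" "0 \<le> s" "0 \<le> y0"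
    and outside: "1 < norm (x0, y0)"
  shows "pi - arcsin (1 / norm (x0, y0)) + atan2 y0 x0 + atan2 s (- c) < pi
           \<longleftrightarrow> x0 * c + y0 * s < 0 \<and> \<bar>x0 * s - y0 * c\<bar> < 1"
proof -
  define r where "r = norm (x0, y0)"
  define \<theta> where "\<theta> = atan2 y0 x0"
  define \<alpha> where "\<alpha> = atan2 s (- c)"
  have "1 < r"
    using outside by (simp add: r_def)
  have pos: "r * cos \<theta> = x0" "r * sin \<theta> = y0"
    by (simp_all add: r_def \<theta>_def norm_mult_cos_atan2 norm_mult_sin_atan2)
  have "norm (- c, s) = 1"
    using unit by (simp add: norm_Pair)
  then have dir: "cos \<alpha> = - c" "sin \<alpha> = s"
    using norm_mult_cos_atan2[of "- c" s] norm_mult_sin_atan2[of "- c" s] by (simp_all add: \<alpha>_def)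
  have "0 \<le> \<theta>" "\<theta> \<le> pi"
    using \<open>0 \<le> y0\<close> by (simp_all add: \<theta>_def atan2_nonneg_iff atan2_le_pi)
  moreover have "0 \<le> \<alpha>" "\<alpha> < pi / 2"
    using \<open>0 \<le> s\<close> abs_atan2_less_pi_half[of "- c" s] \<open>c < 0\<close> by (simp_all add: \<alpha>_def atan2_nonneg_iff)
  ultimately have "0 \<le> \<theta> + \<alpha>" "\<theta> + \<alpha> \<le> 3 * pi / 2"
    by simp_all
  have rcos: "r * cos (\<theta> + \<alpha>) = - (x0 * c + y0 * s)"
    unfolding cos_add pos[symmetric] dir by (simp add: algebra_simps)
  have rsin: "r * sin (\<theta> + \<alpha>) = x0 * s - y0 * c"
    unfolding sin_add pos[symmetric] dir by (simp add: algebra_simps)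
  have "pi - arcsin (1 / r) + \<theta> + \<alpha> < pi \<longleftrightarrow> \<theta> + \<alpha> < arcsin (1 / r)"
    by linarith
  also have "\<dots> \<longleftrightarrow> 0 < cos (\<theta> + \<alpha>) \<and> \<bar>sin (\<theta> + \<alpha>)\<bar> < 1 / r"
    using \<open>0 \<le> \<theta> + \<alpha>\<close> \<open>\<theta> + \<alpha> \<le> 3 * pi / 2\<close> \<open>1 < r\<close>
    by (intro less_arcsin_iff_cos_sin) auto
  also have "\<dots> \<longleftrightarrow> 0 < r * cos (\<theta> + \<alpha>) \<and> \<bar>r * sin (\<theta> + \<alpha>)\<bar> < 1"
    using \<open>1 < r\<close> by (simp add: zero_less_mult_iff abs_mult field_simps)
  also have "\<dots> \<longleftrightarrow> x0 * c + y0 * s < 0 \<and> \<bar>x0 * s - y0 * c\<bar> < 1"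
    unfolding rcos rsin by linarith
  finally show ?thesis
    by (simp only: r_def \<theta>_def \<alpha>_def)
qed

lemma norm_moving_point_rotated:
  fixes x0 y0 c s v t :: real
  assumes "c\<^sup>2 + s\<^sup>2 = 1"
  shows "(norm (x0 + t * (v * c), y0 + t * (v * s)))\<^sup>2
           = (v * t + (x0 * c + y0 * s))\<^sup>2 + (x0 * s - y0 * c)\<^sup>2"
proof -
  have "(v * t + (x0 * c + y0 * s))\<^sup>2 + (x0 * s - y0 * c)\<^sup>2
      = (x0 + t * (v * c))\<^sup>2 + (y0 + t * (v * s))\<^sup>2 + (x0\<^sup>2 + y0\<^sup>2 - (v * t)\<^sup>2) * (c\<^sup>2 + s\<^sup>2 - 1)"
    by (simp add: power2_eq_square algebra_simps)
  with assms show ?thesis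
    by (simp add: norm_Pair)
qed

lemma line_enters_unit_disc_iff:
  fixes v b w T :: real
  assumes v: "0 < v" and outside: "1 < b\<^sup>2 + w\<^sup>2" and "0 < T"
  shows "(\<exists>t\<in>{0..T}. (v * t + b)\<^sup>2 + w\<^sup>2 < 1)
           \<longleftrightarrow> b < 0 \<and> \<bar>w\<bar> < 1 \<and> (- b - sqrt (1 - w\<^sup>2)) / v < T"
proof -
  define h where "h = sqrt (1 - w\<^sup>2)"
  have inside_iff: "(v * t + b)\<^sup>2 + w\<^sup>2 < 1 \<longleftrightarrow> \<bar>w\<bar> < 1 \<and> \<bar>v * t + b\<bar> < h" for t
  proof -
    have "\<bar>v * t + b\<bar> < h \<longleftrightarrow> (v * t + b)\<^sup>2 < 1 - w\<^sup>2"
      unfolding h_def by (metis real_sqrt_abs real_sqrt_less_iff)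
    moreover have "\<bar>w\<bar> < 1" if "(v * t + b)\<^sup>2 < 1 - w\<^sup>2"
    proof -
      have "w\<^sup>2 < 1"
        using that zero_le_power2[of "v * t + b"] by linarith
      then show ?thesis
        by (simp add: abs_square_less_1)
    qed
    ultimately show ?thesis
      by auto
  qed
  have divide_less_T: "(- b - h) / v < T \<longleftrightarrow> - b - h < v * T"
    using v by (simp add: pos_divide_less_eq mult.commute)
  show ?thesis
    unfolding h_def[symmetric]
  proof
    assume "\<exists>t\<in>{0..T}. (v * t + b)\<^sup>2 + w\<^sup>2 < 1"
    then obtain t where t: "0 \<le> t" "t \<le> T" and w: "\<bar>w\<bar> < 1" and close: "\<bar>v * t + b\<bar> < h"
      using inside_iff by auto
    have "1 - w\<^sup>2 < b\<^sup>2"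
      using outside by linarith
    then have "h < \<bar>b\<bar>"
      unfolding h_def by (metis real_sqrt_abs real_sqrt_less_iff)
    moreover have "0 \<le> v * t"
      using v t by simp
    ultimately have "b < 0"
      using close by linarith
    moreover have "- b - h < v * T"
      using close mult_left_mono[OF \<open>t \<le> T\<close>, of v] v by linarith
    ultimately show "b < 0 \<and> \<bar>w\<bar> < 1 \<and> (- b - h) / v < T"
      using w divide_less_T by blast
  next
    assume "b < 0 \<and> \<bar>w\<bar> < 1 \<and> (- b - h) / v < T"
    then have b: "b < 0" and w: "\<bar>w\<bar> < 1" and T: "- b - h < v * T"
      using divide_less_T by auto
    have "0 < h"
      using w by (simp add: h_def abs_square_less_1)
    define t where "t = min T (- b / v)"
    have "0 \<le> t" "t \<le> T"
      using b v \<open>0 < T\<close> by (auto simp: t_def divide_neg_pos less_imp_le)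
    moreover have "\<bar>v * t + b\<bar> < h"
      using v b T \<open>0 < h\<close> by (auto simp: t_def min_def field_simps)
    ultimately show "\<exists>t\<in>{0..T}. (v * t + b)\<^sup>2 + w\<^sup>2 < 1"
      using w inside_iff by auto
  qed
qed

lemma relative_velocity_polar:
  fixes \<mu> \<psi> :: real
  assumes "\<bar>\<mu>\<bar> < 1"
  defines "v \<equiv> sqrt (1 + \<mu>\<^sup>2 - 2 * \<mu> * cos \<psi>)" and "\<phi> \<equiv> atan2 (\<mu> * sin \<psi>) (\<mu> * cos \<psi> - 1)"
  shows "0 < v" "v * cos \<phi> = \<mu> * cos \<psi> - 1" "v * sin \<phi> = \<mu> * sin \<psi>"
    and "cos \<phi> < 0" "0 \<le> sin \<phi> \<longleftrightarrow> 0 \<le> \<mu> * sin \<psi>"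
    and "atan2 (\<mu> * sin \<psi>) (1 - \<mu> * cos \<psi>) = atan2 (sin \<phi>) (- cos \<phi>)"
proof -
  have "\<mu> * cos \<psi> \<le> \<bar>\<mu>\<bar>"
    using abs_ge_self[of "\<mu> * cos \<psi>"] mult_left_le[OF abs_cos_le_one abs_ge_zero, of \<mu> \<psi>]
    by (simp add: abs_mult)
  have "(\<mu> * cos \<psi> - 1)\<^sup>2 + (\<mu> * sin \<psi>)\<^sup>2 = \<mu>\<^sup>2 * ((sin \<psi>)\<^sup>2 + (cos \<psi>)\<^sup>2) + 1 - 2 * \<mu> * cos \<psi>"
    by algebra
  then have "v = norm (\<mu> * cos \<psi> - 1, \<mu> * sin \<psi>)"
    by (simp add: v_def norm_Pair)
  with \<open>\<mu> * cos \<psi> \<le> \<bar>\<mu>\<bar>\<close> assms(1)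
  show "0 < v" and vel: "v * cos \<phi> = \<mu> * cos \<psi> - 1" "v * sin \<phi> = \<mu> * sin \<psi>"
    by (simp_all add: \<phi>_def norm_mult_cos_atan2 norm_mult_sin_atan2 zero_prod_def)
  with \<open>\<mu> * cos \<psi> \<le> \<bar>\<mu>\<bar>\<close> assms(1) have "v * cos \<phi> < 0"
    by linarith
  with \<open>0 < v\<close> show "cos \<phi> < 0"
    by (simp add: mult_less_0_iff)
  from \<open>0 < v\<close> show "0 \<le> sin \<phi> \<longleftrightarrow> 0 \<le> \<mu> * sin \<psi>"
    by (simp add: zero_le_mult_iff flip: vel(2))
  show "atan2 (\<mu> * sin \<psi>) (1 - \<mu> * cos \<psi>) = atan2 (sin \<phi>) (- cos \<phi>)"
    using atan2_scale[OF \<open>0 < v\<close>, of "sin \<phi>" "- cos \<phi>"] vel by simp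
qed

theorem lemma5:
  fixes \<mu> \<psi> x0 y0 T :: real
  assumes "0 < \<mu>" "\<mu> < 1"
    and "y0 \<ge> 0"
    and "sin \<psi> \<ge> 0"
    and "norm (x0, y0) > 1"
    and "T > 0"
  defines "\<phi>tan \<equiv> pi - arcsin (1 / norm (x0, y0)) + atan2 y0 x0"
    and "\<phi> \<equiv> atan2 (\<mu> * sin \<psi>) (\<mu> * cos \<psi> - 1)"
    and "v \<equiv> sqrt (1 + \<mu>^2 - 2 * \<mu> * cos \<psi>)"
  defines "tc \<equiv> (1 / v) * (- (x0 * cos \<phi> + y0 * sin \<phi>)
                  - sqrt (1 - (x0 * sin \<phi> - y0 * cos \<phi>)^2))"
  shows "(\<exists>t\<in>{0..T}. norm (traj \<mu> \<psi> x0 y0 t) < 1) \<longleftrightarrow>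
         (\<phi>tan + atan2 (\<mu> * sin \<psi>) (1 - \<mu> * cos \<psi>) < pi \<and> T > tc)"
proof -
  define b w where "b = x0 * cos \<phi> + y0 * sin \<phi>" and "w = x0 * sin \<phi> - y0 * cos \<phi>"
  have "\<bar>\<mu>\<bar> < 1"
    using assms(1,2) by simp
  then have "0 < v" and vel: "v * cos \<phi> = \<mu> * cos \<psi> - 1" "v * sin \<phi> = \<mu> * sin \<psi>"
    and "cos \<phi> < 0" and sin_nonneg_iff: "0 \<le> sin \<phi> \<longleftrightarrow> 0 \<le> \<mu> * sin \<psi>"
    and mirror: "atan2 (\<mu> * sin \<psi>) (1 - \<mu> * cos \<psi>) = atan2 (sin \<phi>) (- cos \<phi>)"
    unfolding v_def \<phi>_def by (fact relative_velocity_polar)+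
  have unit: "(cos \<phi>)\<^sup>2 + (sin \<phi>)\<^sup>2 = 1"
    by simp
  have inside_iff: "norm (traj \<mu> \<psi> x0 y0 t) < 1 \<longleftrightarrow> (v * t + b)\<^sup>2 + w\<^sup>2 < 1" for t
  proof -
    have "norm (traj \<mu> \<psi> x0 y0 t) < 1 \<longleftrightarrow> (norm (traj \<mu> \<psi> x0 y0 t))\<^sup>2 < 1"
      by (simp add: abs_square_less_1)
    with norm_moving_point_rotated[OF unit, of x0 t v y0] show ?thesis
      by (simp add: traj_def b_def w_def vel)
  qed
  have "1 < (norm (x0, y0))\<^sup>2"
    using assms(5) by (simp add: one_less_power)
  then have outside: "1 < b\<^sup>2 + w\<^sup>2"
    using norm_moving_point_rotated[OF unit, of x0 0 v y0] by (simp add: b_def w_def)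
  have "0 \<le> sin \<phi>"
    using sin_nonneg_iff assms(1,4) by simp
  with tangent_angle_condition_iff[OF unit \<open>cos \<phi> < 0\<close> _ assms(3,5)]
  have angle: "\<phi>tan + atan2 (\<mu> * sin \<psi>) (1 - \<mu> * cos \<psi>) < pi \<longleftrightarrow> b < 0 \<and> \<bar>w\<bar> < 1"
    by (simp add: \<phi>tan_def b_def w_def mirror)
  have "tc = (- b - sqrt (1 - w\<^sup>2)) / v"
    by (simp add: tc_def b_def w_def)
  then show ?thesis
    using line_enters_unit_disc_iff[OF \<open>0 < v\<close> outside assms(6)] inside_iff angle by simp
qed

end
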